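(* Let $(M,\underline{g})$ be a stationary axisymmetric vacuum spacetime with line element, in coordinates $(t,\rho,z,\phi)$, $$\underline{g}=k^2e^{-2\psi}\left[e^{2\gamma}\left(d\rho^2+dz^2\right)+R^2d\phi^2\right]-e^{2\psi}\left(dt-\omega\, d\phi\right)^2,$$ where $k$ is a real constant and $\psi,\gamma,\omega,R$ are smooth functions of $(\rho,z)$ only. Suppose $\eta=C_1\partial_t+C_2\partial_\rho+C_3\partial_z+C_4\partial_\phi$ satisfies $\mathcal{L}_\eta\underline{g}=2\Psi\,\underline{g}$ for a constant $\Psi$, where each component $C_i=C_i(t,\rho)$ is a function of $t$ and $\rho$ only, and suppose $C_2$ and $C_3$ are constants with $C_2=C_3=0$. Then $\Psi=0$, i.e. $\eta$ is a Killing vector, and $\eta=c_1\partial_t+c_4\partial_\phi$ for constants $c_1,c_4$.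
   Context: The metric components are $\underline{g}_{tt}=-e^{2\psi}$, $\underline{g}_{t\phi}=\omega e^{2\psi}$, $\underline{g}_{\rho\rho}=\underline{g}_{zz}=k^2e^{2(\gamma-\psi)}$, and $\underline{g}_{\phi\phi}=W:=k^2R^2e^{-2\psi}-\omega^2e^{2\psi}$. The metric is assumed nondegenerate. The spacetime is a vacuum solution of Einstein's equations, constructed from a complex Ernst potential $\mathcal{E}$ with $\mathrm{Re}(\mathcal{E})=e^{2\psi}$ satisfying $\mathrm{Re}(\mathcal{E})\bar\nabla^2\mathcal{E}=\bar\nabla\mathcal{E}\cdot\bar\nabla\mathcal{E}$ with $\bar\nabla^2=\partial_{\rho\rho}+\rho^{-1}\partial_\rho+\partial_{zz}$, $\bar\nabla=(\partial_\rho,\partial_z)$, and $R$ satisfies $R_{,\rho\rho}+R_{,zz}=0$. A vector field with $\mathcal{L}_\eta\underline{g}=2\Psi\underline{g}$, $\Psi$ constant, is called homothetic; if $\Psi=0$ it is a Killing vector. *)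

theory Defs
  imports "HOL-Analysis.Analysis"
begin

primrec Ck_on :: "nat \<Rightarrow> 'a::real_normed_vector set \<Rightarrow> ('a \<Rightarrow> 'b::real_normed_vector) \<Rightarrow> bool" where
  "Ck_on 0 U f = continuous_on U f"
| "Ck_on (Suc n) U f =
     (f differentiable_on U \<and> (\<forall>v. Ck_on n U (\<lambda>x. frechet_derivative f (at x) v)))"

definition smooth_on :: "'a::real_normed_vector set \<Rightarrow> ('a \<Rightarrow> 'b::real_normed_vector) \<Rightarrow> bool" where
  "smooth_on U f \<longleftrightarrow> open U \<and> (\<forall>n. Ck_on n U f)"

text \<open>Spacetime points are coordinate vectors x in real^4 with
  x$0 = t, x$1 = rho, x$2 = z, x$3 = phi.\<close>

definition pd :: "(real^4 \<Rightarrow> real) \<Rightarrow> 4 \<Rightarrow> real^4 \<Rightarrow> real" where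
  "pd f i x = vector_derivative (\<lambda>s. f (x + s *\<^sub>R axis i 1)) (at 0)"

definition lie_metric :: "(real^4 \<Rightarrow> real^4) \<Rightarrow> (real^4 \<Rightarrow> real^4^4) \<Rightarrow> real^4 \<Rightarrow> 4 \<Rightarrow> 4 \<Rightarrow> real" where
  "lie_metric eta g x a b =
     (\<Sum>c\<in>UNIV. eta x $ c * pd (\<lambda>y. g y $ a $ b) c x
               + g x $ c $ b * pd (\<lambda>y. eta y $ c) a x
               + g x $ a $ c * pd (\<lambda>y. eta y $ c) b x)"

definition homothetic :: "(real^4) set \<Rightarrow> (real^4 \<Rightarrow> real^4^4) \<Rightarrow> (real^4 \<Rightarrow> real^4) \<Rightarrow> real \<Rightarrow> bool" where
  "homothetic \<Omega> g eta \<Psi> \<longleftrightarrow> (\<forall>x\<in>\<Omega>. \<forall>a b. lie_metric eta g x a b = 2 * \<Psi> * g x $ a $ b)"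

definition killing :: "(real^4) set \<Rightarrow> (real^4 \<Rightarrow> real^4^4) \<Rightarrow> (real^4 \<Rightarrow> real^4) \<Rightarrow> bool" where
  "killing \<Omega> g eta \<longleftrightarrow> homothetic \<Omega> g eta 0"

text \<open>The stationary axisymmetric metric
  k^2 e^(-2psi) [e^(2gamma)(drho^2+dz^2) + R^2 dphi^2] - e^(2psi)(dt - omega dphi)^2.\<close>
definition sa_metric :: "real \<Rightarrow> (real \<Rightarrow> real \<Rightarrow> real) \<Rightarrow> (real \<Rightarrow> real \<Rightarrow> real) \<Rightarrow>
    (real \<Rightarrow> real \<Rightarrow> real) \<Rightarrow> (real \<Rightarrow> real \<Rightarrow> real) \<Rightarrow> real^4 \<Rightarrow> real^4^4" where
  "sa_metric k \<psi> \<gamma> \<omega> R x =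
    (let r = x $ 1; z = x $ 2;
         gtt = - exp (2 * \<psi> r z);
         gtp = \<omega> r z * exp (2 * \<psi> r z);
         grr = k\<^sup>2 * exp (2 * (\<gamma> r z - \<psi> r z));
         gpp = k\<^sup>2 * (R r z)\<^sup>2 * exp (- 2 * \<psi> r z) - (\<omega> r z)\<^sup>2 * exp (2 * \<psi> r z)
     in (\<chi> a b. if a = 0 \<and> b = 0 then gtt
                else if (a = 0 \<and> b = 3) \<or> (a = 3 \<and> b = 0) then gtp
                else if (a = 1 \<and> b = 1) \<or> (a = 2 \<and> b = 2) then grr
                else if a = 3 \<and> b = 3 then gpp
                else 0))"

definition coord_field :: "(real \<Rightarrow> real \<Rightarrow> real) \<Rightarrow> (real \<Rightarrow> real \<Rightarrow> real) \<Rightarrow>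
    (real \<Rightarrow> real \<Rightarrow> real) \<Rightarrow> (real \<Rightarrow> real \<Rightarrow> real) \<Rightarrow> real^4 \<Rightarrow> real^4" where
  "coord_field C1 C2 C3 C4 x =
    (\<chi> i. if i = 0 then C1 (x $ 0) (x $ 1)
          else if i = 1 then C2 (x $ 0) (x $ 1)
          else if i = 2 then C3 (x $ 0) (x $ 1)
          else C4 (x $ 0) (x $ 1))"

definition d_rho :: "(real \<Rightarrow> real \<Rightarrow> 'b::real_normed_vector) \<Rightarrow> real \<Rightarrow> real \<Rightarrow> 'b" where
  "d_rho f r z = vector_derivative (\<lambda>s. f s z) (at r)"

definition d_z :: "(real \<Rightarrow> real \<Rightarrow> 'b::real_normed_vector) \<Rightarrow> real \<Rightarrow> real \<Rightarrow> 'b" where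
  "d_z f r z = vector_derivative (\<lambda>s. f r s) (at z)"

end

theory Submission
  imports Defs
begin

(* The metric does not depend on t and phi and is block diagonal with respect to the splitting
   (t, phi) | (rho, z), while eta has no rho- and z-components and depends only on (t, rho).
   Hence the (rho, rho) component of L_eta g vanishes identically, and since nondegeneracy
   forces g_rho_rho = k^2 e^(2 (gamma - psi)) to be nonzero, Psi = 0.  For i in {t, rho} the
   (t, i) and (phi, i) components of the Killing equation then say that the (t, phi) block of g,
   invertible by nondegeneracy, annihilates (d_i C1, d_i C4).  So C1 and C4 have vanishing
   gradient on the connected set R x rho(D) and are constant. *)

lemma UNIV_4_eq: "(UNIV :: 4 set) = {0, 1, 2, 3}"
proof -
  have "(4::4) = 0"
    by simp
  then show ?thesis
    using UNIV_4 by auto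
qed

lemma sum_UNIV_4: "sum f (UNIV::4 set) = f 0 + f 1 + f 2 + f 3"
  unfolding UNIV_4_eq by (simp add: ac_simps)

lemma forall_UNIV_4: "(\<forall>i::4. P i) \<longleftrightarrow> P 0 \<and> P 1 \<and> P 2 \<and> P 3"
  using UNIV_4_eq by (metis UNIV_I empty_iff insert_iff)

lemma vector_derivative_along_line:
  assumes "(f has_derivative f') (at p)"
  shows "vector_derivative (\<lambda>s. f (p + s *\<^sub>R v)) (at 0) = f' v"
proof -
  have "((\<lambda>s. p + s *\<^sub>R v) has_derivative (\<lambda>s. s *\<^sub>R v)) (at 0)"
    by (auto intro!: derivative_eq_intros)
  then have "((\<lambda>s. f (p + s *\<^sub>R v)) has_derivative (\<lambda>s. f' (s *\<^sub>R v))) (at 0)"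
    using has_derivative_compose assms by fastforce
  then have "((\<lambda>s. f (p + s *\<^sub>R v)) has_vector_derivative f' v) (at 0)"
    by (simp add: has_vector_derivative_def linear_scale[OF has_derivative_linear[OF assms]])
  then show ?thesis
    by (rule vector_derivative_at)
qed

lemma constant_on_if_directional_derivatives_vanish:
  fixes f :: "'a::euclidean_space \<Rightarrow> 'b::real_normed_vector"
  assumes "open S" "connected S" "f differentiable_on S"
    and vanish: "\<And>p b. p \<in> S \<Longrightarrow> b \<in> Basis \<Longrightarrow> vector_derivative (\<lambda>s. f (p + s *\<^sub>R b)) (at 0) = 0"
  shows "\<exists>c. \<forall>p\<in>S. f p = c"
proof -
  have zero_derivative: "(f has_derivative (\<lambda>h. 0)) (at p)" if p: "p \<in> S" for p
  proof -
    obtain f' where f': "(f has_derivative f') (at p)"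
      using assms(3) p at_within_open[OF p assms(1)]
      by (auto simp: differentiable_on_def differentiable_def)
    have "f' = (\<lambda>h. 0)"
      by (rule linear_eq_stdbasis)
        (use has_derivative_linear[OF f'] bounded_linear_zero[THEN bounded_linear.linear] vector_derivative_along_line[OF f'] vanish[OF p] in auto)
    with f' show ?thesis
      by simp
  qed
  show ?thesis
    using has_derivative_zero_unique_connected[OF assms(1,2) zero_derivative] by blast
qed

lemma smooth_on_imp_differentiable_on: "smooth_on S f \<Longrightarrow> f differentiable_on S"
  by (metis Ck_on.simps(2) smooth_on_def)

lemma det_nz_mult_vec_eq_0:
  fixes A :: "'a::field^'n^'n"
  assumes "det A \<noteq> 0" "A *v v = 0"
  shows "v = 0"
  using assms invertible_det_nz matrix_left_invertible_ker unfolding invertible_def by blast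

lemma det_nz_block_injective:
  fixes G :: "real^4^4"
  assumes "det G \<noteq> 0"
    and off_block: "\<And>i j. i \<in> {1, 2} \<Longrightarrow> j \<in> {0, 3} \<Longrightarrow> G $ i $ j = 0"
    and "G $ 0 $ 0 * a + G $ 0 $ 3 * b = 0" "G $ 3 $ 0 * a + G $ 3 $ 3 * b = 0"
  shows "a = 0 \<and> b = 0"
proof -
  define v :: "real^4" where "v = (\<chi> i. if i = 0 then a else if i = 3 then b else 0)"
  have "G *v v = 0"
    using assms(3,4) off_block
    by (auto simp: vec_eq_iff forall_UNIV_4 matrix_vector_mult_def sum_UNIV_4 v_def)
  then have "v = 0"
    using det_nz_mult_vec_eq_0 assms(1) by blast
  then show ?thesis
    by (auto simp: vec_eq_iff v_def dest: spec[of _ 0] spec[of _ 3])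
qed

lemma pd_const:
  assumes "\<And>s. f (x + s *\<^sub>R axis i 1) = f x"
  shows "pd f i x = 0"
  unfolding pd_def assms by simp

lemma pd_zero: "pd (\<lambda>y. 0) i x = 0"
  by (rule pd_const) simp

lemma pd_t_rho_function:
  "pd (\<lambda>y. f (y $ 0) (y $ 1)) i x =
     vector_derivative (\<lambda>s. case_prod f ((x $ 0, x $ 1) + s *\<^sub>R (axis i 1 $ 0, axis i 1 $ 1))) (at 0)"
  unfolding pd_def by simp

lemma pd_t_rho_function_z_phi:
  "i \<in> {2, 3} \<Longrightarrow> pd (\<lambda>y. f (y $ 0) (y $ 1)) i x = 0"
  by (rule pd_const) (auto simp: axis_def)

lemma t_rho_function_constant:
  fixes f :: "real \<Rightarrow> real \<Rightarrow> real" and D :: "(real \<times> real) set"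
  assumes "connected D" and smooth: "smooth_on (UNIV \<times> fst ` D) (\<lambda>(t, r). f t r)"
    and vanish: "\<And>x i. (x $ 1, x $ 2) \<in> D \<Longrightarrow> i \<in> {0, 1} \<Longrightarrow> pd (\<lambda>y. f (y $ 0) (y $ 1)) i x = 0"
  shows "\<exists>c. \<forall>x :: real^4. (x $ 1, x $ 2) \<in> D \<longrightarrow> f (x $ 0) (x $ 1) = c"
proof -
  let ?S = "(UNIV :: real set) \<times> fst ` D"
  have "\<exists>c. \<forall>p\<in>?S. case_prod f p = c"
  proof (rule constant_on_if_directional_derivatives_vanish)
    show "open ?S"
      using smooth by (simp add: smooth_on_def)
    show "case_prod f differentiable_on ?S"
      using smooth by (rule smooth_on_imp_differentiable_on)
    have "connected (fst ` D)"
      by (rule connected_continuous_image[OF _ \<open>connected D\<close>]) (intro continuous_intros)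
    then show "connected ?S"
      by (intro connected_Times connected_UNIV)
  next
    fix p b assume "p \<in> ?S" "b \<in> (Basis :: (real \<times> real) set)"
    obtain t r z where p: "p = (t, r)" "(r, z) \<in> D"
      using \<open>p \<in> ?S\<close> by auto
    obtain i :: 4 where i: "i \<in> {0, 1}" and b: "b = (axis i 1 $ 0, axis i 1 $ 1)"
    proof -
      have "b = (1, 0) \<or> b = (0, 1)"
        using \<open>b \<in> Basis\<close> by (auto simp: Basis_prod_def)
      then show ?thesis
        using that[of 0] that[of 1] by (auto simp: axis_def)
    qed
    define x :: "real^4" where "x = (\<chi> j. if j = 0 then t else if j = 1 then r else if j = 2 then z else 0)"
    have x: "x $ 0 = t" "x $ 1 = r" "(x $ 1, x $ 2) \<in> D"
      using p by (simp_all add: x_def)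
    have "vector_derivative (\<lambda>s. case_prod f (p + s *\<^sub>R b)) (at 0) = pd (\<lambda>y. f (y $ 0) (y $ 1)) i x"
      unfolding pd_t_rho_function x(1,2) p(1) b ..
    also have "\<dots> = 0"
      using vanish[OF x(3) i] .
    finally show "vector_derivative (\<lambda>s. case_prod f (p + s *\<^sub>R b)) (at 0) = 0" .
  qed
  then obtain c where c: "\<forall>p\<in>?S. case_prod f p = c" ..
  have "f (x $ 0) (x $ 1) = c" if "(x $ 1, x $ 2) \<in> D" for x :: "real^4"
  proof -
    have "x $ 1 \<in> fst ` D"
      using imageI[OF that, of fst] by simp
    then have "(x $ 0, x $ 1) \<in> ?S"
      by (rule SigmaI[OF UNIV_I])
    from bspec[OF c this] show ?thesis
      by simp
  qed
  then show ?thesis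
    by blast
qed

lemma sa_metric_eqI:
  "x $ 1 = y $ 1 \<Longrightarrow> x $ 2 = y $ 2 \<Longrightarrow> sa_metric k \<psi> \<gamma> \<omega> R x = sa_metric k \<psi> \<gamma> \<omega> R y"
  by (simp add: sa_metric_def)

lemma sa_metric_symmetric: "sa_metric k \<psi> \<gamma> \<omega> R x $ a $ b = sa_metric k \<psi> \<gamma> \<omega> R x $ b $ a"
proof -
  have "\<forall>a b. sa_metric k \<psi> \<gamma> \<omega> R x $ a $ b = sa_metric k \<psi> \<gamma> \<omega> R x $ b $ a"
    unfolding forall_UNIV_4 by (simp add: sa_metric_def Let_def)
  then show ?thesis
    by blast
qed

lemma sa_metric_block_diagonal:
  assumes "a \<in> {1, 2}" "b \<in> {0, 3}"
  shows "sa_metric k \<psi> \<gamma> \<omega> R x $ a $ b = 0"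
proof -
  have "\<forall>a\<in>{1, 2}. \<forall>b\<in>{0, 3}. sa_metric k \<psi> \<gamma> \<omega> R x $ a $ b = 0"
    by (simp add: sa_metric_def Let_def)
  with assms show ?thesis
    by blast
qed

lemma sa_metric_rho_column:
  assumes "a \<noteq> 1"
  shows "sa_metric k \<psi> \<gamma> \<omega> R x $ a $ 1 = 0"
proof -
  have "\<forall>a. a \<noteq> 1 \<longrightarrow> sa_metric k \<psi> \<gamma> \<omega> R x $ a $ 1 = 0"
    unfolding forall_UNIV_4 by (simp add: sa_metric_def Let_def)
  with assms show ?thesis
    by blast
qed

lemma sa_metric_rho_rho:
  "sa_metric k \<psi> \<gamma> \<omega> R x $ 1 $ 1 = k\<^sup>2 * exp (2 * (\<gamma> (x $ 1) (x $ 2) - \<psi> (x $ 1) (x $ 2)))"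
  by (simp add: sa_metric_def Let_def)

lemma pd_sa_metric_t_phi:
  assumes "c \<in> {0, 3}"
  shows "pd (\<lambda>y. sa_metric k \<psi> \<gamma> \<omega> R y $ a $ b) c x = 0"
proof (rule pd_const)
  fix s
  show "sa_metric k \<psi> \<gamma> \<omega> R (x + s *\<^sub>R axis c 1) $ a $ b = sa_metric k \<psi> \<gamma> \<omega> R x $ a $ b"
    using assms by (subst sa_metric_eqI[of _ x]) (auto simp: axis_def)
qed

lemma nondegenerate_sa_metric_k_nz:
  assumes "det (sa_metric k \<psi> \<gamma> \<omega> R x) \<noteq> 0"
  shows "k \<noteq> 0"
proof
  assume "k = 0"
  have rho_column: "sa_metric k \<psi> \<gamma> \<omega> R x $ i $ 1 = 0" for i
  proof (cases "i = 1")
    case True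
    then show ?thesis
      using \<open>k = 0\<close> by (simp add: sa_metric_rho_rho)
  next
    case False
    then show ?thesis
      by (rule sa_metric_rho_column)
  qed
  have "sa_metric k \<psi> \<gamma> \<omega> R x *v axis 1 1 = 0"
    unfolding matrix_vector_mult_basis column_def by (simp add: vec_eq_iff rho_column)
  then have "(axis 1 1 :: real^4) = 0"
    using det_nz_mult_vec_eq_0[OF assms] by blast
  then show False
    by (simp add: axis_eq_0_iff)
qed

lemma lie_sa_metric:
  fixes k :: real and \<psi> \<gamma> \<omega> R C1 C4 :: "real \<Rightarrow> real \<Rightarrow> real"
  defines "\<eta> \<equiv> coord_field C1 (\<lambda>_ _. 0) (\<lambda>_ _. 0) C4" and "g \<equiv> sa_metric k \<psi> \<gamma> \<omega> R"
  shows "lie_metric \<eta> g x a b =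
      g x $ 0 $ b * pd (\<lambda>y. C1 (y $ 0) (y $ 1)) a x + g x $ 3 $ b * pd (\<lambda>y. C4 (y $ 0) (y $ 1)) a x
    + g x $ a $ 0 * pd (\<lambda>y. C1 (y $ 0) (y $ 1)) b x + g x $ a $ 3 * pd (\<lambda>y. C4 (y $ 0) (y $ 1)) b x"
proof -
  have \<eta>_rho_z: "\<eta> y $ 1 = 0" "\<eta> y $ 2 = 0" for y
    by (simp_all add: \<eta>_def coord_field_def)
  have \<eta>_t_phi: "(\<lambda>y. \<eta> y $ 0) = (\<lambda>y. C1 (y $ 0) (y $ 1))" "(\<lambda>y. \<eta> y $ 3) = (\<lambda>y. C4 (y $ 0) (y $ 1))"
    by (simp_all add: \<eta>_def coord_field_def)
  have pd_g_t_phi: "pd (\<lambda>y. g y $ a $ b) 0 x = 0" "pd (\<lambda>y. g y $ a $ b) 3 x = 0" for a b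
    unfolding g_def by (simp_all add: pd_sa_metric_t_phi)
  show ?thesis
    unfolding lie_metric_def sum_UNIV_4 \<eta>_t_phi
    by (simp add: \<eta>_rho_z pd_zero pd_g_t_phi ac_simps)
qed

lemma homothetic_sa_metric_factor_zero:
  fixes k \<Psi> :: real and \<psi> \<gamma> \<omega> R C1 C4 :: "real \<Rightarrow> real \<Rightarrow> real"
  defines "\<eta> \<equiv> coord_field C1 (\<lambda>_ _. 0) (\<lambda>_ _. 0) C4" and "g \<equiv> sa_metric k \<psi> \<gamma> \<omega> R"
  assumes nondeg: "det (g x) \<noteq> 0" and homot: "lie_metric \<eta> g x 1 1 = 2 * \<Psi> * g x $ 1 $ 1"
  shows "\<Psi> = 0"
proof -
  have "g x $ 0 $ 1 = 0" "g x $ 3 $ 1 = 0" "g x $ 1 $ 0 = 0" "g x $ 1 $ 3 = 0"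
    unfolding g_def by (simp_all add: sa_metric_rho_column sa_metric_block_diagonal)
  then have "lie_metric \<eta> g x 1 1 = 0"
    unfolding \<eta>_def g_def by (simp add: lie_sa_metric)
  moreover have "g x $ 1 $ 1 \<noteq> 0"
    using nondegenerate_sa_metric_k_nz[OF nondeg[unfolded g_def]] by (simp add: g_def sa_metric_rho_rho)
  ultimately show ?thesis
    using homot by simp
qed

lemma killing_sa_metric_partials_vanish:
  fixes k :: real and \<psi> \<gamma> \<omega> R C1 C4 :: "real \<Rightarrow> real \<Rightarrow> real"
  defines "\<eta> \<equiv> coord_field C1 (\<lambda>_ _. 0) (\<lambda>_ _. 0) C4" and "g \<equiv> sa_metric k \<psi> \<gamma> \<omega> R"
  assumes nondeg: "det (g x) \<noteq> 0" and killing: "\<And>a b. lie_metric \<eta> g x a b = 0"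
    and i: "i \<in> {0, 1}"
  shows "pd (\<lambda>y. C1 (y $ 0) (y $ 1)) i x = 0 \<and> pd (\<lambda>y. C4 (y $ 0) (y $ 1)) i x = 0"
proof (rule det_nz_block_injective[OF nondeg])
  show "g x $ j $ l = 0" if "j \<in> {1, 2}" "l \<in> {0, 3}" for j l
    using that unfolding g_def by (rule sa_metric_block_diagonal)
  have "g x $ 3 $ 0 = g x $ 0 $ 3"
    unfolding g_def by (rule sa_metric_symmetric)
  moreover have "g x $ 0 $ 1 = 0" "g x $ 3 $ 1 = 0"
    unfolding g_def by (simp_all add: sa_metric_rho_column)
  moreover have "pd (\<lambda>y. C1 (y $ 0) (y $ 1)) 3 x = 0" "pd (\<lambda>y. C4 (y $ 0) (y $ 1)) 3 x = 0"
    by (simp_all add: pd_t_rho_function_z_phi)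
  ultimately show
    "g x $ 0 $ 0 * pd (\<lambda>y. C1 (y $ 0) (y $ 1)) i x + g x $ 0 $ 3 * pd (\<lambda>y. C4 (y $ 0) (y $ 1)) i x = 0"
    "g x $ 3 $ 0 * pd (\<lambda>y. C1 (y $ 0) (y $ 1)) i x + g x $ 3 $ 3 * pd (\<lambda>y. C4 (y $ 0) (y $ 1)) i x = 0"
    using i killing[of 0 i] killing[of 3 i] unfolding \<eta>_def g_def by (auto simp: lie_sa_metric algebra_simps)
qed

theorem proposition5:
  fixes k \<Psi> :: real
    and \<psi> \<gamma> \<omega> R :: "real \<Rightarrow> real \<Rightarrow> real"
    and \<E> :: "real \<Rightarrow> real \<Rightarrow> complex"
    and C1 C2 C3 C4 :: "real \<Rightarrow> real \<Rightarrow> real"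
    and D :: "(real \<times> real) set"
  defines "\<Omega> \<equiv> {x :: real^4. (x $ 1, x $ 2) \<in> D}"
  defines "g \<equiv> sa_metric k \<psi> \<gamma> \<omega> R"
  defines "\<eta> \<equiv> coord_field C1 C2 C3 C4"
  assumes D_open: "open D" and D_conn: "connected D" and D_ne: "D \<noteq> {}"
    and smooth_psi: "smooth_on D (\<lambda>(r, z). \<psi> r z)"
    and smooth_gamma: "smooth_on D (\<lambda>(r, z). \<gamma> r z)"
    and smooth_omega: "smooth_on D (\<lambda>(r, z). \<omega> r z)"
    and smooth_R: "smooth_on D (\<lambda>(r, z). R r z)"
    and smooth_E: "smooth_on D (\<lambda>(r, z). \<E> r z)"
    and ernst_re: "\<forall>(r, z)\<in>D. Re (\<E> r z) = exp (2 * \<psi> r z)"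
    and ernst_eq: "\<forall>(r, z)\<in>D.
          complex_of_real (Re (\<E> r z)) *
            (d_rho (d_rho \<E>) r z + d_rho \<E> r z / complex_of_real r + d_z (d_z \<E>) r z)
          = (d_rho \<E> r z)\<^sup>2 + (d_z \<E> r z)\<^sup>2"
    and R_harm: "\<forall>(r, z)\<in>D. d_rho (d_rho R) r z + d_z (d_z R) r z = 0"
    and nondeg: "\<forall>x\<in>\<Omega>. det (g x) \<noteq> 0"
    and smooth_C1: "smooth_on (UNIV \<times> fst ` D) (\<lambda>(t, r). C1 t r)"
    and smooth_C2: "smooth_on (UNIV \<times> fst ` D) (\<lambda>(t, r). C2 t r)"
    and smooth_C3: "smooth_on (UNIV \<times> fst ` D) (\<lambda>(t, r). C3 t r)"
    and smooth_C4: "smooth_on (UNIV \<times> fst ` D) (\<lambda>(t, r). C4 t r)"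
    and C2_zero: "\<forall>t r. C2 t r = 0"
    and C3_zero: "\<forall>t r. C3 t r = 0"
    and homot: "homothetic \<Omega> g \<eta> \<Psi>"
  shows "\<Psi> = 0 \<and> killing \<Omega> g \<eta> \<and>
         (\<exists>c1 c4 :: real. \<forall>x\<in>\<Omega>. \<eta> x = c1 *\<^sub>R axis 0 1 + c4 *\<^sub>R axis 3 1)"
proof -
  have \<eta>_eq: "\<eta> = coord_field C1 (\<lambda>_ _. 0) (\<lambda>_ _. 0) C4"
    using C2_zero C3_zero by (simp add: \<eta>_def fun_eq_iff coord_field_def)
  have lie: "lie_metric \<eta> g x a b = 2 * \<Psi> * g x $ a $ b" if "x \<in> \<Omega>" for x a b
    using homot that by (simp add: homothetic_def)
  obtain x0 where "x0 \<in> \<Omega>"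
  proof -
    obtain r z where "(r, z) \<in> D"
      using D_ne by auto
    then show ?thesis
      using that[of "\<chi> i. if i = 1 then r else z"] by (simp add: \<Omega>_def)
  qed
  then have \<Psi>_zero: "\<Psi> = 0"
    using homothetic_sa_metric_factor_zero nondeg lie unfolding g_def \<eta>_eq by blast
  then have killing: "killing \<Omega> g \<eta>"
    using homot by (simp add: killing_def)
  have partials: "pd (\<lambda>y. C1 (y $ 0) (y $ 1)) i x = 0 \<and> pd (\<lambda>y. C4 (y $ 0) (y $ 1)) i x = 0"
    if x: "x \<in> \<Omega>" and i: "i \<in> {0, 1}" for x i
  proof -
    have "det (g x) \<noteq> 0" "\<And>a b. lie_metric \<eta> g x a b = 0"
      using nondeg lie[OF x] \<Psi>_zero x by simp_all
    from killing_sa_metric_partials_vanish[OF this[unfolded g_def \<eta>_eq] i] show ?thesis .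
  qed
  obtain c1 where c1: "\<forall>x :: real^4. (x $ 1, x $ 2) \<in> D \<longrightarrow> C1 (x $ 0) (x $ 1) = c1"
    using t_rho_function_constant[OF D_conn smooth_C1] partials unfolding \<Omega>_def by blast
  obtain c4 where c4: "\<forall>x :: real^4. (x $ 1, x $ 2) \<in> D \<longrightarrow> C4 (x $ 0) (x $ 1) = c4"
    using t_rho_function_constant[OF D_conn smooth_C4] partials unfolding \<Omega>_def by blast
  have "\<forall>x\<in>\<Omega>. \<eta> x = c1 *\<^sub>R axis 0 1 + c4 *\<^sub>R axis 3 1"
    using c1 c4 by (simp add: \<Omega>_def \<eta>_eq coord_field_def vec_eq_iff forall_UNIV_4 axis_def)
  with \<Psi>_zero killing show ?thesis
    by blast
qed

end
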